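(* Fix an integer $m\ge1$ and a real $\bar c>m$. For $n\in\mathbb{N}$ define $H_2(n)=\max\{M\in\mathbb{N}_0:\lfloor (m+M)^2/4\rfloor\le mn\}$, $H_3(n)=\lfloor\sqrt{n\bar c+1}\rfloor$, $H_4(n)=\lfloor\sqrt{\tfrac14+n\bar c}-\tfrac12\rfloor$, $H_5(n)=\min\big(\lfloor n(\bar c-m)/k_5+m\rfloor,\,n\big)$, where $k_5=\lceil m+\sqrt{m^2+n(\bar c-2m)}\rceil$ if $m^2+n(\bar c-2m)\ge0$ and $k_5=1$ otherwise, and $H_6(n)=\min\big(\lfloor n(\bar c-m)/k_6+m\rfloor,\,n-1\big)$, where $k_6=\lceil m+1+\sqrt{(m+1)^2+n(\bar c-2m)}\rceil$ if $(m+1)^2+n(\bar c-2m)\ge0$ and $k_6=1$ otherwise. Then for every $q\in\{5,6\}$ and $p\in\{2,3,4\}$, $\liminf_{n\to\infty} H_q(n)/H_p(n)\ge1$.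
   Context: These functions are the upper bounds on the maximum degree under which various sufficient conditions guarantee graphicality (with loops) of a bidegree sequence with $n$ entries, minimum degree $m$ and average degree $\bar c$; the claim is purely about the displayed functions. *)

theory Defs
  imports Complex_Main "HOL-Library.Liminf_Limsup" "HOL-Library.Extended_Real"
begin

text \<open>Parameters: m (minimum degree, a positive integer), c (average degree, real), n (length).\<close>

definition H2 :: "nat \<Rightarrow> real \<Rightarrow> nat \<Rightarrow> int" where
  "H2 m c n = int (Max {M::nat. (m + M)^2 div 4 \<le> m * n})"

definition H3 :: "nat \<Rightarrow> real \<Rightarrow> nat \<Rightarrow> int" where
  "H3 m c n = \<lfloor>sqrt (real n * c + 1)\<rfloor>"

definition H4 :: "nat \<Rightarrow> real \<Rightarrow> nat \<Rightarrow> int" where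
  "H4 m c n = \<lfloor>sqrt (1/4 + real n * c) - 1/2\<rfloor>"

definition k5 :: "nat \<Rightarrow> real \<Rightarrow> nat \<Rightarrow> int" where
  "k5 m c n = (if real m ^ 2 + real n * (c - 2 * real m) \<ge> 0
     then \<lceil>real m + sqrt (real m ^ 2 + real n * (c - 2 * real m))\<rceil> else 1)"

definition H5 :: "nat \<Rightarrow> real \<Rightarrow> nat \<Rightarrow> int" where
  "H5 m c n = min \<lfloor>real n * (c - real m) / real_of_int (k5 m c n) + real m\<rfloor> (int n)"

definition k6 :: "nat \<Rightarrow> real \<Rightarrow> nat \<Rightarrow> int" where
  "k6 m c n = (if (real m + 1) ^ 2 + real n * (c - 2 * real m) \<ge> 0
     then \<lceil>real m + 1 + sqrt ((real m + 1) ^ 2 + real n * (c - 2 * real m))\<rceil> else 1)"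

definition H6 :: "nat \<Rightarrow> real \<Rightarrow> nat \<Rightarrow> int" where
  "H6 m c n = min \<lfloor>real n * (c - real m) / real_of_int (k6 m c n) + real m\<rfloor> (int n - 1)"

definition H :: "nat \<Rightarrow> nat \<Rightarrow> real \<Rightarrow> nat \<Rightarrow> int" where
  "H q m c n = (if q = 2 then H2 m c n else if q = 3 then H3 m c n else if q = 4 then H4 m c n
      else if q = 5 then H5 m c n else H6 m c n)"

end

theory Submission
  imports Defs "HOL-Real_Asymp.Real_Asymp"
begin

text \<open>
  Writing \<open>d = c - 2m\<close>, the bounds \<open>H\<^sub>2, H\<^sub>3, H\<^sub>4\<close> are all at most \<open>\<surd>(n\<beta> + \<gamma>)\<close> with
  \<open>\<beta> \<in> {4m, c}\<close>, and in both cases \<open>d\<beta> \<le> (c - m)\<^sup>2\<close>. If \<open>d > 0\<close>, then \<open>k\<^sub>5, k\<^sub>6 \<sim> \<surd>(nd)\<close>, so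
  \<open>H\<^sub>5, H\<^sub>6 \<sim> (c - m)\<surd>n / \<surd>d\<close> and the ratio tends to \<open>(c - m) / \<surd>(d\<beta>) \<ge> 1\<close>. If \<open>d \<le> 0\<close>,
  then \<open>k\<^sub>5, k\<^sub>6\<close> stay bounded, \<open>H\<^sub>5, H\<^sub>6\<close> grow linearly and the ratio tends to infinity.
\<close>

lemma Liminf_ratio_ge_one:
  fixes Q P a b :: "'a \<Rightarrow> real"
  assumes "eventually (\<lambda>x. a x \<le> Q x) F"
    and "eventually (\<lambda>x. 0 < P x \<and> P x \<le> b x) F"
    and "1 \<le> Liminf F (\<lambda>x. ereal (a x / b x))"
  shows "1 \<le> Liminf F (\<lambda>x. ereal (Q x / P x))"
proof -
  have "0 < Liminf F (\<lambda>x. ereal (a x / b x))"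
    using ereal_0_less_1 assms(3) by (rule less_le_trans)
  then have "eventually (\<lambda>x. 0 < a x / b x) F"
    by (rule less_LiminfD[where y = 0, THEN eventually_mono]) simp
  with assms(1,2) have "eventually (\<lambda>x. ereal (a x / b x) \<le> ereal (Q x / P x)) F"
  proof eventually_elim
    case (elim x)
    then have "0 < a x" by (auto simp: zero_less_divide_iff)
    then have "a x / b x \<le> a x / P x"
      using elim by (intro divide_left_mono) auto
    also have "\<dots> \<le> Q x / P x"
      using elim by (intro divide_right_mono) auto
    finally show ?case by (simp only: ereal_less_eq)
  qed
  then have "Liminf F (\<lambda>x. ereal (a x / b x)) \<le> Liminf F (\<lambda>x. ereal (Q x / P x))"
    by (rule Liminf_mono)
  with assms(3) show ?thesis by (rule order_trans)
qed

lemma H2_set_sq_bound: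
  fixes m n M :: nat
  assumes "(m + M)\<^sup>2 div 4 \<le> m * n"
  shows "M\<^sup>2 \<le> 4 * m * n + 3"
proof -
  have "M\<^sup>2 \<le> (m + M)\<^sup>2" by (rule power_mono) simp_all
  also have "\<dots> \<le> 4 * m * n + 3" using assms by linarith
  finally show ?thesis .
qed

lemma H2_set_finite: "finite {M::nat. (m + M)\<^sup>2 div 4 \<le> m * n}"
proof (rule finite_subset)
  show "{M. (m + M)\<^sup>2 div 4 \<le> m * n} \<subseteq> {..4 * m * n + 3}"
  proof
    fix M
    assume "M \<in> {M. (m + M)\<^sup>2 div 4 \<le> m * n}"
    then have "M\<^sup>2 \<le> 4 * m * n + 3" by (simp add: H2_set_sq_bound)
    moreover have "M \<le> M\<^sup>2" by (simp add: power2_eq_square le_square)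
    ultimately show "M \<in> {..4 * m * n + 3}" by (metis atMost_iff order_trans)
  qed
qed simp

lemma one_in_H2_set:
  assumes "1 \<le> m" "m \<le> n"
  shows "1 \<in> {M::nat. (m + M)\<^sup>2 div 4 \<le> m * n}"
proof -
  have "(m + 1)\<^sup>2 \<le> (2 * m)\<^sup>2" using assms by (intro power_mono) auto
  also have "\<dots> \<le> 4 * (m * n)" using assms by (simp add: power2_eq_square)
  finally show ?thesis by simp
qed

lemma H2_bounds:
  assumes "1 \<le> m" "m \<le> n"
  shows "1 \<le> H2 m c n" and "real_of_int (H2 m c n) \<le> sqrt (real n * (4 * real m) + 3)"
proof -
  let ?S = "{M::nat. (m + M)\<^sup>2 div 4 \<le> m * n}"
  have H2: "H2 m c n = int (Max ?S)" unfolding H2_def ..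
  have "1 \<le> Max ?S" by (rule Max_ge[OF H2_set_finite one_in_H2_set[OF assms]])
  then show "1 \<le> H2 m c n" by (simp add: H2)
  have "Max ?S \<in> ?S"
    using Max_in[OF H2_set_finite] one_in_H2_set[OF assms] by blast
  then have "(Max ?S)\<^sup>2 \<le> 4 * m * n + 3" by (simp add: H2_set_sq_bound)
  then have "real ((Max ?S)\<^sup>2) \<le> real (4 * m * n + 3)" by (rule of_nat_mono)
  then have "(real (Max ?S))\<^sup>2 \<le> real n * (4 * real m) + 3" by (simp add: algebra_simps)
  then show "real_of_int (H2 m c n) \<le> sqrt (real n * (4 * real m) + 3)"
    unfolding H2 by (simp add: real_le_rsqrt)
qed

lemma H3_pos: "0 < c \<Longrightarrow> 0 < H3 m c n"
  unfolding H3_def by (simp add: zero_less_floor)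

lemma H3_le_sqrt: "real_of_int (H3 m c n) \<le> sqrt (real n * c + 1)"
  unfolding H3_def by (rule of_int_floor_le)

lemma H4_pos:
  assumes "2 \<le> real n * c"
  shows "0 < H4 m c n"
proof -
  have "sqrt (9/4) \<le> sqrt (1/4 + real n * c)"
    using assms by (intro real_sqrt_le_mono) linarith
  moreover have "sqrt (9/4 :: real) = 3/2" by (simp add: real_sqrt_divide)
  ultimately show ?thesis unfolding H4_def by (simp add: zero_less_floor)
qed

lemma H4_le_sqrt: "real_of_int (H4 m c n) \<le> sqrt (real n * c + 1/4)"
proof -
  have "real_of_int (H4 m c n) \<le> sqrt (1/4 + real n * c) - 1/2"
    unfolding H4_def by (rule of_int_floor_le)
  then show ?thesis by (simp add: add.commute)
qed

lemma H234_eventually_le_sqrt: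
  assumes "1 \<le> m" "real m < c" "p \<in> {2, 3, 4}"
  obtains \<beta> \<gamma> :: real where "0 < \<beta>" "(c - 2 * real m) * \<beta> \<le> (c - real m)\<^sup>2"
    and "eventually (\<lambda>n. 0 < H p m c n \<and> real_of_int (H p m c n) \<le> sqrt (real n * \<beta> + \<gamma>)) sequentially"
proof -
  have "1 < c" using assms by linarith
  consider "p = 2" | "p = 3" | "p = 4" using assms(3) by blast
  then show ?thesis
  proof cases
    case 1
    have "(c - real m)\<^sup>2 - (c - 2 * real m) * (4 * real m) = (c - 3 * real m)\<^sup>2"
      by (simp add: power2_eq_square algebra_simps)
    then have "(c - 2 * real m) * (4 * real m) \<le> (c - real m)\<^sup>2"
      by (smt (verit) zero_le_power2)
    moreover have "eventually (\<lambda>n. 0 < H p m c n \<and> real_of_int (H p m c n) \<le> sqrt (real n * (4 * real m) + 3)) sequentially"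
      using eventually_ge_at_top[of m]
    proof eventually_elim
      case (elim n)
      show ?case using H2_bounds[OF assms(1) elim, of c] by (auto simp: H_def 1)
    qed
    ultimately show ?thesis using assms(1) by (intro that) auto
  next
    case 2
    have "(c - 2 * real m) * c \<le> (c - real m)\<^sup>2"
      by (simp add: power2_eq_square algebra_simps)
    moreover have "eventually (\<lambda>n. 0 < H p m c n \<and> real_of_int (H p m c n) \<le> sqrt (real n * c + 1)) sequentially"
      using H3_pos H3_le_sqrt \<open>1 < c\<close> by (simp add: H_def 2)
    ultimately show ?thesis using \<open>1 < c\<close> by (intro that) auto
  next
    case 3
    have "(c - 2 * real m) * c \<le> (c - real m)\<^sup>2"
      by (simp add: power2_eq_square algebra_simps)
    moreover have "eventually (\<lambda>n. 2 \<le> real n * c) sequentially"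
      using \<open>1 < c\<close> by real_asymp
    then have "eventually (\<lambda>n. 0 < H p m c n \<and> real_of_int (H p m c n) \<le> sqrt (real n * c + 1/4)) sequentially"
      by eventually_elim (simp add: H_def 3 H4_pos H4_le_sqrt)
    ultimately show ?thesis using \<open>1 < c\<close> by (intro that) auto
  qed
qed

text \<open>The ceiling of the larger root of \<open>x\<^sup>2 - 2ux - nd\<close>, or \<open>1\<close> if there is no real root.\<close>

definition root_ceiling :: "real \<Rightarrow> real \<Rightarrow> nat \<Rightarrow> int" where
  "root_ceiling u d n =
     (if 0 \<le> u\<^sup>2 + real n * d then \<lceil>u + sqrt (u\<^sup>2 + real n * d)\<rceil> else 1)"

lemma k5_eq_root_ceiling: "k5 m c n = root_ceiling (real m) (c - 2 * real m) n"
  unfolding k5_def root_ceiling_def ..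

lemma k6_eq_root_ceiling: "k6 m c n = root_ceiling (real m + 1) (c - 2 * real m) n"
  unfolding k6_def root_ceiling_def ..

lemma root_ceiling_pos:
  fixes u d :: real
  assumes "0 < u"
  shows "0 < root_ceiling u d n"
  using assms by (simp add: root_ceiling_def zero_less_ceiling add_pos_nonneg)

lemma root_ceiling_le:
  fixes u d :: real
  assumes "0 \<le> d"
  shows "real_of_int (root_ceiling u d n) \<le> u + 1 + sqrt (u\<^sup>2 + real n * d)"
proof -
  have "root_ceiling u d n = \<lceil>u + sqrt (u\<^sup>2 + real n * d)\<rceil>"
    using assms by (simp add: root_ceiling_def)
  then show ?thesis
    using of_int_ceiling_le_add_one[of "u + sqrt (u\<^sup>2 + real n * d)"] by linarith
qed

lemma root_ceiling_le_const:
  fixes u d :: real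
  assumes "0 < u" "d \<le> 0"
  shows "real_of_int (root_ceiling u d n) \<le> 2 * u + 1"
proof (cases "0 \<le> u\<^sup>2 + real n * d")
  case True
  have "sqrt (u\<^sup>2 + real n * d) \<le> sqrt (u\<^sup>2)"
    using assms by (intro real_sqrt_le_mono) (simp add: mult_nonneg_nonpos)
  then have "u + sqrt (u\<^sup>2 + real n * d) \<le> 2 * u" using assms by simp
  moreover have "root_ceiling u d n = \<lceil>u + sqrt (u\<^sup>2 + real n * d)\<rceil>"
    using True by (simp add: root_ceiling_def)
  ultimately show ?thesis
    using of_int_ceiling_le_add_one[of "u + sqrt (u\<^sup>2 + real n * d)"] by linarith
qed (use assms in \<open>simp add: root_ceiling_def\<close>)

lemma min_floor_divide_ge:
  fixes A k K w :: real and N :: int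
  assumes "0 \<le> A" "0 < k" "k \<le> K"
  shows "min (A / K + w - 1) (real_of_int N) \<le> real_of_int (min \<lfloor>A / k + w\<rfloor> N)"
proof -
  have "A / K \<le> A / k" using assms by (intro divide_left_mono) auto
  moreover have "A / k + w - 1 \<le> real_of_int \<lfloor>A / k + w\<rfloor>"
    using real_of_int_floor_add_one_gt[of "A / k + w"] by linarith
  ultimately show ?thesis by linarith
qed

lemma H56_lower_bound:
  assumes "1 \<le> m" "real m < c" "q \<in> {5, 6}"
  obtains u :: real where "0 < u"
    and "\<And>n K. real_of_int (root_ceiling u (c - 2 * real m) n) \<le> K \<Longrightarrow>
           min (real n * (c - real m) / K + real m - 1) (real n - 1) \<le> real_of_int (H q m c n)"
proof -
  have A: "0 \<le> real n * (c - real m)" for n using assms(2) by simp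
  consider "q = 5" | "q = 6" using assms(3) by blast
  then show ?thesis
  proof cases
    case 1
    show ?thesis
    proof (rule that)
      fix n K
      assume "real_of_int (root_ceiling (real m) (c - 2 * real m) n) \<le> K"
      moreover have "0 < real_of_int (root_ceiling (real m) (c - 2 * real m) n)"
        using root_ceiling_pos assms(1) by simp
      ultimately have "min (real n * (c - real m) / K + real m - 1) (real_of_int (int n))
          \<le> real_of_int (H5 m c n)"
        unfolding H5_def k5_eq_root_ceiling by (intro min_floor_divide_ge A)
      then show "min (real n * (c - real m) / K + real m - 1) (real n - 1) \<le> real_of_int (H q m c n)"
        by (simp add: H_def 1)
    qed (use assms(1) in simp)
  next
    case 2
    show ?thesis
    proof (rule that)
      fix n K
      assume "real_of_int (root_ceiling (real m + 1) (c - 2 * real m) n) \<le> K"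
      moreover have "0 < real_of_int (root_ceiling (real m + 1) (c - 2 * real m) n)"
        using root_ceiling_pos by simp
      ultimately have "min (real n * (c - real m) / K + real m - 1) (real_of_int (int n - 1))
          \<le> real_of_int (H6 m c n)"
        unfolding H6_def k6_eq_root_ceiling by (intro min_floor_divide_ge A)
      then show "min (real n * (c - real m) / K + real m - 1) (real n - 1) \<le> real_of_int (H q m c n)"
        by (simp add: H_def 2)
    qed simp
  qed
qed

lemma tendsto_div_sqrt:
  fixes a d \<beta> u v w \<gamma> :: real
  assumes "0 < a" "0 < d" "0 < \<beta>"
  shows "((\<lambda>n. (real n * a / (u + sqrt (v + real n * d)) + w - 1) / sqrt (real n * \<beta> + \<gamma>))
           \<longlongrightarrow> a / (sqrt d * sqrt \<beta>)) sequentially"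
proof -
  have "((\<lambda>n. (real n * a / (u + sqrt (v + real n * d)) + w - 1) / sqrt (real n * \<beta> + \<gamma>))
           \<longlongrightarrow> a * inverse (d powr (1/2)) * inverse (\<beta> powr (1/2))) sequentially"
    using assms by real_asymp
  moreover have "d powr (1/2) = sqrt d" "\<beta> powr (1/2) = sqrt \<beta>"
    using assms by (simp_all add: powr_half_sqrt)
  ultimately show ?thesis
    by (simp only: divide_inverse inverse_mult_distrib mult.assoc)
qed

lemma eventually_div_sqrt_le:
  fixes a d u v w :: real
  assumes "0 < a" "0 < d"
  shows "eventually (\<lambda>n. real n * a / (u + sqrt (v + real n * d)) + w - 1 \<le> real n - 1) sequentially"
  using assms by real_asymp

lemma Liminf_H56_ratio_ge_one:
  fixes P :: "nat \<Rightarrow> real"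
  assumes "1 \<le> m" "real m < c" "q \<in> {5, 6}"
    and "0 < \<beta>" "(c - 2 * real m) * \<beta> \<le> (c - real m)\<^sup>2"
    and P: "eventually (\<lambda>n. 0 < P n \<and> P n \<le> sqrt (real n * \<beta> + \<gamma>)) sequentially"
  shows "1 \<le> Liminf sequentially (\<lambda>n. ereal (real_of_int (H q m c n) / P n))"
proof -
  obtain u where "0 < u" and H: "\<And>n K. real_of_int (root_ceiling u (c - 2 * real m) n) \<le> K \<Longrightarrow>
      min (real n * (c - real m) / K + real m - 1) (real n - 1) \<le> real_of_int (H q m c n)"
    using H56_lower_bound[OF assms(1-3)] by blast
  define d where "d = c - 2 * real m"
  have "0 < c - real m" using assms(2) by simp
  show ?thesis
  proof (cases "0 < d")
    case True
    let ?a = "\<lambda>n. real n * (c - real m) / (u + 1 + sqrt (u\<^sup>2 + real n * d)) + real m - 1"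
    have "sqrt (d * \<beta>) \<le> c - real m"
      using assms(5) \<open>0 < c - real m\<close> by (intro real_le_lsqrt) (auto simp: d_def)
    then have "1 \<le> (c - real m) / (sqrt d * sqrt \<beta>)"
      using True assms(4) by (simp add: real_sqrt_mult)
    moreover have "Liminf sequentially (\<lambda>n. ereal (?a n / sqrt (real n * \<beta> + \<gamma>)))
        = ereal ((c - real m) / (sqrt d * sqrt \<beta>))"
      using tendsto_div_sqrt[OF \<open>0 < c - real m\<close> True assms(4),
          where u = "u + 1" and v = "u\<^sup>2" and w = "real m" and \<gamma> = \<gamma>]
      by (intro lim_imp_Liminf[OF trivial_limit_sequentially] tendsto_ereal)
    ultimately have lim: "1 \<le> Liminf sequentially (\<lambda>n. ereal (?a n / sqrt (real n * \<beta> + \<gamma>)))"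
      by (simp add: one_ereal_def)
    have lower: "eventually (\<lambda>n. ?a n \<le> real_of_int (H q m c n)) sequentially"
      using eventually_div_sqrt_le[OF \<open>0 < c - real m\<close> True,
          where u = "u + 1" and v = "u\<^sup>2" and w = "real m"]
    proof eventually_elim
      case (elim n)
      have "min (?a n) (real n - 1) \<le> real_of_int (H q m c n)"
        using H[OF root_ceiling_le] True unfolding d_def by simp
      then show ?case unfolding min_absorb1[OF elim] .
    qed
    from lower P lim show ?thesis by (rule Liminf_ratio_ge_one)
  next
    case False
    define \<alpha> where "\<alpha> = min ((c - real m) / (2 * u + 1)) 1"
    have "0 < \<alpha>" using \<open>0 < u\<close> \<open>0 < c - real m\<close> by (simp add: \<alpha>_def)
    have lower: "eventually (\<lambda>n. real n * \<alpha> - 1 \<le> real_of_int (H q m c n)) sequentially"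
    proof (intro always_eventually allI)
      fix n
      have "real n * \<alpha> \<le> real n * ((c - real m) / (2 * u + 1))" "real n * \<alpha> \<le> real n * 1"
        unfolding \<alpha>_def by (intro mult_left_mono min.cobounded1 min.cobounded2 of_nat_0_le_iff)+
      then have "real n * \<alpha> - 1
          \<le> min (real n * (c - real m) / (2 * u + 1) + real m - 1) (real n - 1)"
        using assms(1) by simp
      also have "\<dots> \<le> real_of_int (H q m c n)"
        using H[OF root_ceiling_le_const[OF \<open>0 < u\<close>]] False unfolding d_def by simp
      finally show "real n * \<alpha> - 1 \<le> real_of_int (H q m c n)" .
    qed
    have "eventually (\<lambda>n. 1 \<le> (real n * \<alpha> - 1) / sqrt (real n * \<beta> + \<gamma>)) sequentially"
      using \<open>0 < \<alpha>\<close> assms(4) by real_asymp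
    then have lim: "1 \<le> Liminf sequentially (\<lambda>n. ereal ((real n * \<alpha> - 1) / sqrt (real n * \<beta> + \<gamma>)))"
      by (intro Liminf_bounded) (simp add: one_ereal_def)
    from lower P lim show ?thesis by (rule Liminf_ratio_ge_one)
  qed
qed

theorem corollary4:
  fixes m :: nat and c :: real
  assumes "m \<ge> 1" and "c > real m"
  shows "\<forall>q\<in>{5,6}. \<forall>p\<in>{2,3,4}.
    Liminf sequentially (\<lambda>n. ereal (real_of_int (H q m c n) / real_of_int (H p m c n))) \<ge> 1"
proof (intro ballI)
  fix q p :: nat
  assume q: "q \<in> {5, 6}" and p: "p \<in> {2, 3, 4}"
  obtain \<beta> \<gamma> where "0 < \<beta>" "(c - 2 * real m) * \<beta> \<le> (c - real m)\<^sup>2"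
    and "eventually (\<lambda>n. 0 < H p m c n \<and> real_of_int (H p m c n) \<le> sqrt (real n * \<beta> + \<gamma>)) sequentially"
    using H234_eventually_le_sqrt[OF assms p] by blast
  then show "1 \<le> Liminf sequentially (\<lambda>n. ereal (real_of_int (H q m c n) / real_of_int (H p m c n)))"
    by (intro Liminf_H56_ratio_ge_one[OF assms q]) simp_all
qed

end
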